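(* Let $E$ be an order continuous Banach lattice with a weak unit, represented over a probability space $(\Omega,\Sigma,\mu)$ as in the context, let $Y$ be a Banach space and $T\in\mathrm{DN\text{-}S}(E,Y)$. Then there exists $r>0$ such that for every measurable set $A\subset\Omega$ with $0<\mu(A)<r$, the restriction of $T$ to $E_A=\{x\in E:\operatorname{supp}x\subset A\}$ is an isomorphism (into $Y$).
   Context: A Banach lattice $E$ is order continuous if every net decreasing in order to $0$ converges in norm to $0$; $e\in E_+$ is a weak unit if $|x|\wedge e=0$ implies $x=0$. Representation: every order continuous Banach lattice $E$ with a weak unit can be represented over a probability space $(\Omega,\Sigma,\mu)$ so that $L_\infty(\mu)\subset E\subset L_1(\mu)$, $E$ is dense in $L_1(\mu)$, $L_\infty(\mu)$ is dense in $E$, $\|f\|_1\le\|f\|_E\le 2\|f\|_\infty$ for $f\in L_\infty(\mu)$, and the order of $E$ is the one induced by $L_1(\mu)$; such a representation is fixed. For $x\in E$, $\operatorname{supp}x=\{t\in\Omega: x(t)\neq 0\}$. An operator is strictly singular if it is an isomorphism on no closed infinite-dimensional subspace. $T\in\mathrm{L}(E,Y)$ is disjointly non-singular ($T\in\mathrm{DN\text{-}S}(E,Y)$) if there is no disjoint sequence $(x_n)$ of non-zero vectors of $E$ such that the restriction of $T$ to the closed span $[x_n]$ is strictly singular. *)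

theory Defs
  imports "HOL-Probability.Probability"
begin


definition lat_abs :: "'a::{ab_group_add, lattice} \<Rightarrow> 'a" where
  "lat_abs x = sup x (- x)"

definition banach_lattice :: "'e::{banach, ordered_real_vector, lattice} itself \<Rightarrow> bool" where
  "banach_lattice _ \<longleftrightarrow>
     (\<forall>x y :: 'e. lat_abs x \<le> lat_abs y \<longrightarrow> norm x \<le> norm y)"

text \<open>Order continuity: every net decreasing in order to 0 converges in norm to 0.
  Nets are given by an index set I with a directed preorder le; index sets are taken
  inside the type 'e, which suffices since every net decreasing to 0 can be
  reindexed by its own range (a downward directed set).\<close>
definition order_continuous :: "'e::{banach, ordered_real_vector, lattice} itself \<Rightarrow> bool" where
  "order_continuous _ \<longleftrightarrow>
     (\<forall>(I :: 'e set) (le :: 'e \<Rightarrow> 'e \<Rightarrow> bool) (x :: 'e \<Rightarrow> 'e).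
        (I \<noteq> {} \<and> (\<forall>a\<in>I. le a a) \<and> (\<forall>a\<in>I. \<forall>b\<in>I. \<forall>c\<in>I. le a b \<and> le b c \<longrightarrow> le a c)
          \<and> (\<forall>a\<in>I. \<forall>b\<in>I. \<exists>c\<in>I. le a c \<and> le b c)
          \<and> (\<forall>a\<in>I. \<forall>b\<in>I. le a b \<longrightarrow> x b \<le> x a)
          \<and> (\<forall>a\<in>I. 0 \<le> x a)
          \<and> (\<forall>z. (\<forall>a\<in>I. z \<le> x a) \<longrightarrow> z \<le> 0))
        \<longrightarrow> (\<forall>\<epsilon>>0. \<exists>a\<in>I. \<forall>b\<in>I. le a b \<longrightarrow> norm (x b) < \<epsilon>))"

definition weak_unit :: "'e::{banach, ordered_real_vector, lattice} \<Rightarrow> bool" where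
  "weak_unit e \<longleftrightarrow> 0 \<le> e \<and> (\<forall>x. inf (lat_abs x) e = 0 \<longrightarrow> x = 0)"

text \<open>The fixed function function_representation of E over a probability space M:
  J x is a representative of the class of x in L_1(M);
  L_inf(M) \<subseteq> E \<subseteq> L_1(M), E dense in L_1, L_inf dense in E,
  ||f||_1 \<le> ||f||_E \<le> 2||f||_inf for f in L_inf, order induced by L_1.\<close>
definition ess_bounded :: "'w measure \<Rightarrow> ('w \<Rightarrow> real) \<Rightarrow> bool" where
  "ess_bounded M f \<longleftrightarrow> (\<exists>C. AE t in M. \<bar>f t\<bar> \<le> C)"

definition function_representation ::
  "'w measure \<Rightarrow> ('e::{banach, ordered_real_vector, lattice} \<Rightarrow> 'w \<Rightarrow> real) \<Rightarrow> bool" where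
  "function_representation M J \<longleftrightarrow>
     prob_space M
   \<and> (\<forall>x. J x \<in> borel_measurable M \<and> integrable M (J x))
   \<and> (\<forall>x y. AE t in M. J (x + y) t = J x t + J y t)
   \<and> (\<forall>c x. AE t in M. J (c *\<^sub>R x) t = c * J x t)
   \<and> (\<forall>x y. x \<le> y \<longleftrightarrow> (AE t in M. J x t \<le> J y t))
   \<and> (\<forall>f \<in> borel_measurable M. ess_bounded M f \<longrightarrow> (\<exists>x. AE t in M. J x t = f t))
   \<and> (\<forall>f. integrable M f \<longrightarrow> (\<forall>\<epsilon>>0. \<exists>x. (\<integral>t. \<bar>f t - J x t\<bar> \<partial>M) < \<epsilon>))
   \<and> (\<forall>x. \<forall>\<epsilon>>0. \<exists>y. ess_bounded M (J y) \<and> norm (x - y) < \<epsilon>)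
   \<and> (\<forall>x. ess_bounded M (J x) \<longrightarrow> (\<integral>t. \<bar>J x t\<bar> \<partial>M) \<le> norm x)
   \<and> (\<forall>x C. (AE t in M. \<bar>J x t\<bar> \<le> C) \<longrightarrow> norm x \<le> 2 * C)"

definition band_of :: "'w measure \<Rightarrow> ('e \<Rightarrow> 'w \<Rightarrow> real) \<Rightarrow> 'w set \<Rightarrow> 'e set" where
  "band_of M J A = {x. AE t in M. J x t \<noteq> 0 \<longrightarrow> t \<in> A}"

definition iso_on :: "('e::real_normed_vector \<Rightarrow> 'y::real_normed_vector) \<Rightarrow> 'e set \<Rightarrow> bool" where
  "iso_on T Z \<longleftrightarrow> (\<exists>c>0. \<forall>z\<in>Z. c * norm z \<le> norm (T z))"

definition infinite_dimensional :: "'e::real_vector set \<Rightarrow> bool" where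
  "infinite_dimensional Z \<longleftrightarrow> (\<exists>B \<subseteq> Z. independent B \<and> infinite B)"

definition strictly_singular_on :: "('e::real_normed_vector \<Rightarrow> 'y::real_normed_vector) \<Rightarrow> 'e set \<Rightarrow> bool" where
  "strictly_singular_on T W \<longleftrightarrow>
     \<not> (\<exists>Z. Z \<subseteq> W \<and> subspace Z \<and> closed Z \<and> infinite_dimensional Z \<and> iso_on T Z)"

definition disjoint_elems :: "'e::{ab_group_add, lattice} \<Rightarrow> 'e \<Rightarrow> bool" where
  "disjoint_elems x y \<longleftrightarrow> inf (lat_abs x) (lat_abs y) = 0"

definition DN_S :: "('e::{banach, ordered_real_vector, lattice} \<Rightarrow> 'y::banach) \<Rightarrow> bool" where
  "DN_S T \<longleftrightarrow> bounded_linear T \<and>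
     \<not> (\<exists>x :: nat \<Rightarrow> 'e. (\<forall>n. x n \<noteq> 0) \<and> (\<forall>n m. n \<noteq> m \<longrightarrow> disjoint_elems (x n) (x m))
            \<and> strictly_singular_on T (closure (span (range x))))"

end

theory Submission
  imports Defs
begin

text \<open>If the conclusion fails, T is not bounded below on bands E_A with mu(A) arbitrarily small.
  Order continuity makes the norm of the restriction of a fixed bounded element to sets of small
  measure uniformly small. So one can pick bounded u_n in E_(A_n) with ||u_n|| >= 1/2 and
  ||T u_n|| <= 4^-n / 2, each A_m so small that cutting the union of the later A_m out of A_n
  perturbs u_n only slightly. The resulting y_n are pairwise disjoint with ||y_n|| >= 1/4 and
  ||T y_n|| <= 4^-n. Integration against y_k yields biorthogonal functionals bounded by 4 ||s||
  on span {y_n}, so T has norm O(4^-N) on the N-th tail of [y_n]; as every infinite-dimensional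
  subspace of [y_n] meets each tail non-trivially, T is strictly singular on [y_n], contradicting
  T in DN-S.\<close>

section \<open>Measure-theoretic estimates\<close>

lemma ess_bounded_AE_abs_le:
  assumes "ess_bounded M g" and "AE t in M. \<bar>f t\<bar> \<le> \<bar>g t\<bar>"
  shows "ess_bounded M f"
proof -
  from assms(1) obtain C where "AE t in M. \<bar>g t\<bar> \<le> C" unfolding ess_bounded_def by blast
  with assms(2) have "AE t in M. \<bar>f t\<bar> \<le> C" by eventually_elim auto
  then show ?thesis unfolding ess_bounded_def by blast
qed

lemma (in finite_measure) measure_UN_le_geometric:
  assumes sets: "\<And>k. B k \<in> sets M" and le: "\<And>k. measure M (B k) \<le> c * q ^ k"
    and q: "0 \<le> q" "q < 1"
  shows "measure M (\<Union>k. B k) \<le> c / (1 - q)"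
proof -
  have sg: "summable (\<lambda>k. c * q ^ k)" using q by (simp add: summable_mult)
  have sm: "summable (\<lambda>k. measure M (B k))"
    by (rule summable_comparison_test'[OF sg, of 0]) (use le in auto)
  have "measure M (\<Union>k. B k) \<le> (\<Sum>k. measure M (B k))"
    by (rule finite_measure_subadditive_countably) (use sets sm in auto)
  also have "\<dots> \<le> (\<Sum>k. c * q ^ k)" by (rule suminf_le[OF le sm sg])
  also have "\<dots> = c / (1 - q)" using q by (simp add: suminf_mult suminf_geometric)
  finally show ?thesis .
qed

lemma decseq_UN_shift: "decseq (\<lambda>n. \<Union>k. B (k + n))"
proof (rule decseq_SucI)
  fix n
  show "(\<Union>k. B (k + Suc n)) \<subseteq> (\<Union>k. B (k + n))"
  proof
    fix t assume "t \<in> (\<Union>k. B (k + Suc n))"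
    then obtain k where "t \<in> B (Suc k + n)" by auto
    then show "t \<in> (\<Union>k. B (k + n))" by blast
  qed
qed

lemma (in finite_measure) measure_Inter_UN_shift_eq_0:
  assumes B: "\<And>n. B n \<in> sets M" "\<And>n. measure M (B n) \<le> (1/2) ^ n"
  shows "measure M (\<Inter>n. \<Union>k. B (k + n)) = 0"
proof -
  have "measure M (\<Inter>n. \<Union>k. B (k + n)) \<le> (1/2) ^ n * 2" for n
  proof -
    have "measure M (B (k + n)) \<le> (1/2) ^ n * (1/2) ^ k" for k
      using B(2)[of "k + n"] by (simp add: power_add mult.commute)
    then have "measure M (\<Union>k. B (k + n)) \<le> (1/2) ^ n / (1 - 1/2)"
      using B(1) by (intro measure_UN_le_geometric) auto
    moreover have "measure M (\<Inter>n. \<Union>k. B (k + n)) \<le> measure M (\<Union>k. B (k + n))"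
      using B(1) by (intro finite_measure_mono) auto
    ultimately show ?thesis by simp
  qed
  then have "measure M (\<Inter>n. \<Union>k. B (k + n)) \<le> 0"
    by (intro LIMSEQ_le_const[OF tendsto_mult_left_zero[OF LIMSEQ_power_zero]]) auto
  then show ?thesis by (simp add: measure_le_0_iff)
qed

lemma sum_geometric_tail_le:
  fixes q :: real
  assumes "0 \<le> q" "q < 1"
  shows "(\<Sum>n\<in>{N..<N'}. q ^ n) \<le> q ^ N / (1 - q)"
proof -
  have "(\<Sum>n\<in>{N..<N'}. q ^ n) = (\<Sum>n<N' - N. q ^ (n + N))"
    by (rule sum.reindex_bij_witness[of _ "\<lambda>n. n + N" "\<lambda>n. n - N"]) auto
  also have "\<dots> \<le> (\<Sum>n. q ^ (n + N))"
    using assms by (intro sum_le_suminf) (auto simp: power_add summable_mult2)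
  also have "\<dots> = q ^ N / (1 - q)"
    using assms by (simp add: power_add suminf_mult2[symmetric] suminf_geometric)
  finally show ?thesis .
qed

lemma (in finite_measure) exists_sparse_sequence:
  assumes "\<And>n m. m > 0 \<Longrightarrow> \<exists>A x \<rho>. A \<in> sets M \<and> measure M A < m \<and> \<rho> > 0 \<and> P n A x \<rho>"
  shows "\<exists>A x \<rho>. \<forall>n. A n \<in> sets M \<and> \<rho> n > 0 \<and> P n (A n) (x n) (\<rho> n)
           \<and> measure M (\<Union>k. A (k + Suc n)) < \<rho> n"
proof -
  have "\<forall>n m. \<exists>A x \<rho>. m > 0 \<longrightarrow> A \<in> sets M \<and> measure M A < m \<and> \<rho> > 0 \<and> P n A x \<rho>"
    using assms by blast
  then obtain Af xf \<rho>f where good: "\<And>n m. m > 0 \<Longrightarrow>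
      Af n m \<in> sets M \<and> measure M (Af n m) < m \<and> \<rho>f n m > 0 \<and> P n (Af n m) (xf n m) (\<rho>f n m)"
    by metis
  \<comment> \<open>The bound \<open>m (Suc n)\<close> on the measure of the next set is at most \<open>\<rho> n / 4\<close>, and the later
    bounds decrease geometrically, so the union of all later sets has measure below \<open>\<rho> n\<close>.\<close>
  define m where "m = rec_nat 1 (\<lambda>n mn. min mn (\<rho>f n mn) / 4)"
  have m_Suc: "m (Suc n) = min (m n) (\<rho>f n (m n)) / 4" for n unfolding m_def by simp
  have m_pos: "m n > 0" for n
  proof (induction n)
    case (Suc n)
    then show ?case using good[OF Suc] by (simp add: m_Suc)
  qed (simp add: m_def)
  define A where "A n = Af n (m n)" for n
  define \<rho> where "\<rho> n = \<rho>f n (m n)" for n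
  have A_sets: "A n \<in> sets M" for n using good[OF m_pos] unfolding A_def by blast
  have \<rho>_pos: "\<rho> n > 0" for n using good[OF m_pos] unfolding \<rho>_def by blast
  have m_le: "m (k + Suc n) \<le> \<rho> n / 4 * (1/4) ^ k" for k n
  proof (induction k)
    case 0
    then show ?case by (simp add: m_Suc \<rho>_def)
  next
    case (Suc k)
    have "m (Suc k + Suc n) \<le> m (k + Suc n) / 4" by (simp add: m_Suc del: add_Suc_right)
    then show ?case using Suc by simp
  qed
  have "measure M (\<Union>k. A (k + Suc n)) < \<rho> n" for n
  proof -
    have "measure M (A (k + Suc n)) \<le> \<rho> n / 4 * (1/4) ^ k" for k
      using good[of "m (k + Suc n)" "k + Suc n"] m_pos m_le[of k n] unfolding A_def by force
    then have "measure M (\<Union>k. A (k + Suc n)) \<le> \<rho> n / 4 / (1 - 1/4)"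
      by (intro measure_UN_le_geometric) (auto simp: A_sets)
    then show ?thesis using \<rho>_pos[of n] by simp
  qed
  moreover have "P n (A n) (xf n (m n)) (\<rho> n)" for n
    using good[OF m_pos] unfolding A_def \<rho>_def by blast
  ultimately show ?thesis using A_sets \<rho>_pos
    by (intro exI[of _ A] exI[of _ "\<lambda>n. xf n (m n)"] exI[of _ \<rho>]) blast
qed

section \<open>Strict singularity on spans of biorthogonal sequences\<close>

lemma span_range_eq_sum:
  fixes y :: "nat \<Rightarrow> 'a::real_vector"
  assumes "s \<in> span (range y)"
  shows "\<exists>a N. s = (\<Sum>n<N. a n *\<^sub>R y n)"
  using assms
proof (induction rule: real_vector.span_induct_alt)
  case base
  show ?case by (auto intro!: exI[of _ "\<lambda>_. 0"])
next
  case (step c x v)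
  then obtain m a N where m: "x = y m" and aN: "v = (\<Sum>n<N. a n *\<^sub>R y n)" by blast
  define N' where "N' = max N (Suc m)"
  have "m < N'" unfolding N'_def by simp
  have "v = (\<Sum>n<N'. (if n < N then a n else 0) *\<^sub>R y n)"
    unfolding aN N'_def by (rule sum.mono_neutral_cong_left) auto
  moreover have "c *\<^sub>R x = (\<Sum>n<N'. (if n = m then c else 0) *\<^sub>R y n)"
    using \<open>m < N'\<close> unfolding m by (simp add: if_distrib[of "\<lambda>r. r *\<^sub>R _"] cong: if_cong)
  ultimately have
    "c *\<^sub>R x + v = (\<Sum>n<N'. ((if n = m then c else 0) + (if n < N then a n else 0)) *\<^sub>R y n)"
    by (simp add: scaleR_add_left sum.distrib)
  then show ?case by (intro exI)
qed

lemma span_range_eq_biorthogonal_sum: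
  fixes y :: "nat \<Rightarrow> 'a::real_vector"
  assumes \<phi>: "\<And>k. linear (\<phi> k)" "\<And>k n. \<phi> k (y n) = (if n = k then 1 else 0)"
    and s: "s \<in> span (range y)"
  shows "\<exists>N. s = (\<Sum>n<N. \<phi> n s *\<^sub>R y n) \<and> (\<forall>k\<ge>N. \<phi> k s = 0)"
proof -
  obtain a N where sa: "s = (\<Sum>n<N. a n *\<^sub>R y n)" using span_range_eq_sum[OF s] by blast
  have coeff: "\<phi> k s = (if k < N then a k else 0)" for k
  proof -
    have "\<phi> k s = (\<Sum>n<N. a n * \<phi> k (y n))"
      unfolding sa by (simp add: linear_sum[OF \<phi>(1)] linear_scale[OF \<phi>(1)])
    also have "\<dots> = (\<Sum>n<N. if n = k then a k else 0)" by (intro sum.cong) (auto simp: \<phi>(2))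
    finally show ?thesis by simp
  qed
  have "(\<Sum>n<N. \<phi> n s *\<^sub>R y n) = (\<Sum>n<N. a n *\<^sub>R y n)"
    by (intro sum.cong) (simp_all add: coeff)
  moreover have "\<forall>k\<ge>N. \<phi> k s = 0" using coeff by simp
  ultimately show ?thesis using sa by metis
qed

lemma infinite_dimensional_subspace_meets_kernel:
  fixes L :: "'a::real_vector \<Rightarrow> 'b::real_vector"
  assumes L: "linear L" "finite F" "range L \<subseteq> span F"
    and Z: "subspace Z" "infinite_dimensional Z"
  shows "\<exists>z\<in>Z. z \<noteq> 0 \<and> L z = 0"
proof -
  from Z(2) obtain B where B: "B \<subseteq> Z" "independent B" "infinite B"
    unfolding infinite_dimensional_def by blast
  obtain S where S: "finite S" "card S = Suc (card F)" "S \<subseteq> B"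
    using infinite_arbitrarily_large[OF B(3)] by blast
  have "\<not> inj_on L (span S)"
  proof
    assume inj: "inj_on L (span S)"
    have "independent (L ` S)"
      using linear_independent_injective_image[OF L(1) independent_mono[OF B(2) S(3)] inj] .
    then have "card (L ` S) \<le> card F"
      using independent_span_bound[OF L(2)] L(3) by blast
    moreover have "card (L ` S) = card S"
      using inj_on_subset[OF inj span_superset] by (rule card_image)
    ultimately show False using S(2) by simp
  qed
  then obtain z where "z \<in> span S" "z \<noteq> 0" "L z = 0"
    using linear_inj_on_iff_eq_0[OF L(1) subspace_span] by blast
  moreover have "span S \<subseteq> Z" using S(3) B(1) Z(1) by (intro span_minimal) auto
  ultimately show ?thesis by blast
qed

lemma norm_le_on_closure:
  fixes T :: "'a::real_normed_vector \<Rightarrow> 'b::real_normed_vector"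
  assumes T: "bounded_linear T" and S: "\<And>s. s \<in> S \<Longrightarrow> norm (T s) \<le> c * norm s"
    and "z \<in> closure S"
  shows "norm (T z) \<le> c * norm z"
proof -
  obtain s where s: "\<And>j. s j \<in> S" "s \<longlonglongrightarrow> z"
    using \<open>z \<in> closure S\<close> unfolding closure_sequential by blast
  have "(\<lambda>j. norm (T (s j))) \<longlonglongrightarrow> norm (T z)"
    by (intro tendsto_norm bounded_linear.tendsto[OF T] s(2))
  moreover have "(\<lambda>j. c * norm (s j)) \<longlonglongrightarrow> c * norm z"
    by (intro tendsto_mult_left tendsto_norm s(2))
  ultimately show ?thesis using S[OF s(1)] by (intro tendsto_le[OF trivial_limit_sequentially]) auto
qed

lemma strictly_singular_on_closure_span:
  fixes y :: "nat \<Rightarrow> 'a::real_normed_vector" and T :: "'a \<Rightarrow> 'b::real_normed_vector"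
    and \<phi> :: "nat \<Rightarrow> 'a \<Rightarrow> real"
  assumes T: "bounded_linear T"
    and \<phi>: "\<And>k. bounded_linear (\<phi> k)" "\<And>k n. \<phi> k (y n) = (if n = k then 1 else 0)"
    and tail: "\<And>\<epsilon>. \<epsilon> > 0 \<Longrightarrow> \<exists>N. \<forall>s\<in>span (range y). (\<forall>k<N. \<phi> k s = 0) \<longrightarrow> norm (T s) \<le> \<epsilon> * norm s"
  shows "strictly_singular_on T (closure (span (range y)))"
  unfolding strictly_singular_on_def
proof
  assume "\<exists>Z\<subseteq>closure (span (range y)). subspace Z \<and> closed Z \<and> infinite_dimensional Z \<and> iso_on T Z"
  then obtain Z c where Z: "Z \<subseteq> closure (span (range y))" "subspace Z" "infinite_dimensional Z"
    and c: "c > 0" "\<And>z. z \<in> Z \<Longrightarrow> c * norm z \<le> norm (T z)"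
    unfolding iso_on_def by blast
  obtain N where N: "\<And>s. s \<in> span (range y) \<Longrightarrow> (\<forall>k<N. \<phi> k s = 0) \<Longrightarrow> norm (T s) \<le> c/2 * norm s"
    using tail[of "c/2"] c(1) by auto
  have lin\<phi>: "linear (\<phi> k)" for k using \<phi>(1) by (rule bounded_linear.linear)
  define L where "L x = (\<Sum>k<N. \<phi> k x *\<^sub>R y k)" for x
  have L: "bounded_linear L" unfolding L_def[abs_def]
    by (intro bounded_linear_sum bounded_linear_compose[OF bounded_linear_scaleR_left \<phi>(1)])
  have \<phi>_L: "\<phi> j (L x) = \<phi> j x" if "j < N" for j x
  proof -
    have "\<phi> j (L x) = (\<Sum>k<N. \<phi> k x * \<phi> j (y k))"
      unfolding L_def by (simp add: linear_sum[OF lin\<phi>] linear_scale[OF lin\<phi>])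
    also have "\<dots> = (\<Sum>k<N. if k = j then \<phi> j x else 0)" by (intro sum.cong) (auto simp: \<phi>(2))
    finally show ?thesis using that by simp
  qed
  have L_span: "L x \<in> span (y ` {..<N})" for x
    unfolding L_def by (intro span_sum span_scale span_base) auto
  then have "range L \<subseteq> span (y ` {..<N})" by blast
  then obtain z where z: "z \<in> Z" "z \<noteq> 0" "L z = 0"
    using infinite_dimensional_subspace_meets_kernel[OF bounded_linear.linear[OF L] _ _ Z(2,3)]
    by blast
  \<comment> \<open>Subtracting \<open>L\<close> projects approximants of \<open>z\<close> into the tail \<open>S\<close>, so \<open>z \<in> closure S\<close>.\<close>
  define S where "S = {s \<in> span (range y). \<forall>k<N. \<phi> k s = 0}"
  have "z \<in> closure (span (range y))" using z(1) Z(1) by blast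
  then obtain s where s: "\<And>j. s j \<in> span (range y)" "s \<longlonglongrightarrow> z"
    unfolding closure_sequential by blast
  have in_S: "s j - L (s j) \<in> S" for j
  proof -
    have "L (s j) \<in> span (range y)" using L_span span_mono[of "y ` {..<N}" "range y"] by blast
    then have "s j - L (s j) \<in> span (range y)" using s(1) by (rule span_diff[rotated])
    then show ?thesis unfolding S_def using \<phi>_L by (simp add: linear_diff[OF lin\<phi>])
  qed
  have "(\<lambda>j. s j - L (s j)) \<longlonglongrightarrow> z"
    using tendsto_diff[OF s(2) bounded_linear.tendsto[OF L s(2)]] z(3) by simp
  with in_S have "z \<in> closure S"
    unfolding closure_sequential by (intro exI[of _ "\<lambda>j. s j - L (s j)"] conjI allI)
  then have "norm (T z) \<le> c/2 * norm z"
    by (rule norm_le_on_closure[OF T, rotated]) (use N in \<open>auto simp: S_def\<close>)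
  moreover have "c * norm z \<le> norm (T z)" using c(2)[OF z(1)] .
  moreover have "0 < c * norm z" using c(1) z(2) by simp
  ultimately show False by linarith
qed

lemma norm_le_tail_of_coefficient_bound:
  fixes y :: "nat \<Rightarrow> 'a::real_normed_vector" and T :: "'a \<Rightarrow> 'b::real_normed_vector"
    and \<phi> :: "nat \<Rightarrow> 'a \<Rightarrow> real"
  assumes T: "linear T"
    and \<phi>: "\<And>k. linear (\<phi> k)" "\<And>k n. \<phi> k (y n) = (if n = k then 1 else 0)"
    and coeff: "\<And>s k. s \<in> span (range y) \<Longrightarrow> \<bar>\<phi> k s\<bar> \<le> C * norm s"
    and small: "\<And>n. norm (T (y n)) \<le> q ^ n" and q: "0 \<le> q" "q < 1"
    and s: "s \<in> span (range y)" "\<And>k. k < N \<Longrightarrow> \<phi> k s = 0"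
  shows "norm (T s) \<le> C * q ^ N / (1 - q) * norm s"
proof -
  have C: "0 \<le> C * norm s" using coeff[OF s(1), of 0] by linarith
  obtain N' where s_eq: "s = (\<Sum>n<N'. \<phi> n s *\<^sub>R y n)"
    using span_range_eq_biorthogonal_sum[OF \<phi> s(1)] by blast
  have "T s = T (\<Sum>n<N'. \<phi> n s *\<^sub>R y n)" by (subst s_eq) (rule refl)
  also have "\<dots> = (\<Sum>n<N'. \<phi> n s *\<^sub>R T (y n))"
    by (simp add: linear_sum[OF T] linear_scale[OF T])
  also have "\<dots> = (\<Sum>n\<in>{N..<N'}. \<phi> n s *\<^sub>R T (y n))"
    using s(2) by (intro sum.mono_neutral_right) auto
  finally have Ts: "T s = (\<Sum>n\<in>{N..<N'}. \<phi> n s *\<^sub>R T (y n))" .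
  have "norm (T s) \<le> (\<Sum>n\<in>{N..<N'}. norm (\<phi> n s *\<^sub>R T (y n)))"
    unfolding Ts by (rule norm_sum)
  also have "\<dots> \<le> (\<Sum>n\<in>{N..<N'}. C * norm s * q ^ n)"
    using C by (intro sum_mono) (auto intro!: mult_mono coeff[OF s(1)] small)
  also have "\<dots> = C * norm s * (\<Sum>n\<in>{N..<N'}. q ^ n)"
    by (simp add: sum_distrib_left)
  also have "\<dots> \<le> C * norm s * (q ^ N / (1 - q))"
    using C q by (intro mult_left_mono sum_geometric_tail_le)
  finally show ?thesis by (simp add: field_simps)
qed

lemma strictly_singular_on_closure_span_of_coefficient_bound:
  fixes y :: "nat \<Rightarrow> 'a::real_normed_vector" and T :: "'a \<Rightarrow> 'b::real_normed_vector"
    and \<phi> :: "nat \<Rightarrow> 'a \<Rightarrow> real"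
  assumes T: "bounded_linear T"
    and \<phi>: "\<And>k. bounded_linear (\<phi> k)" "\<And>k n. \<phi> k (y n) = (if n = k then 1 else 0)"
    and coeff: "\<And>s k. s \<in> span (range y) \<Longrightarrow> \<bar>\<phi> k s\<bar> \<le> C * norm s"
    and small: "\<And>n. norm (T (y n)) \<le> q ^ n" and q: "0 \<le> q" "q < 1"
  shows "strictly_singular_on T (closure (span (range y)))"
proof (rule strictly_singular_on_closure_span[OF T \<phi>])
  fix \<epsilon> :: real assume "\<epsilon> > 0"
  then have "\<epsilon> * (1 - q) / (\<bar>C\<bar> + 1) > 0" using q by simp
  then obtain N where "q ^ N < \<epsilon> * (1 - q) / (\<bar>C\<bar> + 1)"
    using real_arch_pow_inv q(2) by blast
  then have "(\<bar>C\<bar> + 1) * q ^ N < \<epsilon> * (1 - q)"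
    by (simp add: pos_less_divide_eq mult.commute add_pos_nonneg)
  moreover have "C * q ^ N \<le> (\<bar>C\<bar> + 1) * q ^ N" using q by (intro mult_right_mono) auto
  ultimately have \<epsilon>: "C * q ^ N / (1 - q) \<le> \<epsilon>" using q by (simp add: divide_le_eq)
  show "\<exists>N. \<forall>s\<in>span (range y). (\<forall>k<N. \<phi> k s = 0) \<longrightarrow> norm (T s) \<le> \<epsilon> * norm s"
  proof (intro exI ballI impI)
    fix s assume "s \<in> span (range y)" "\<forall>k<N. \<phi> k s = 0"
    then have "norm (T s) \<le> C * q ^ N / (1 - q) * norm s"
      by (intro norm_le_tail_of_coefficient_bound[OF bounded_linear.linear[OF T]
            bounded_linear.linear[OF \<phi>(1)] \<phi>(2) coeff small q]) auto
    also have "\<dots> \<le> \<epsilon> * norm s" using \<epsilon> by (rule mult_right_mono) simp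
    finally show "norm (T s) \<le> \<epsilon> * norm s" .
  qed
qed

lemma norm_ge_and_image_norm_le_perturb:
  fixes T :: "'a::real_normed_vector \<Rightarrow> 'b::real_normed_vector"
  assumes T: "linear T" "\<And>x. norm (T x) \<le> norm x * K" "K > 0"
    and u: "a \<le> norm u" "norm (T u) \<le> d"
    and uv: "norm (u - v) \<le> \<delta>" "\<delta> * K \<le> d'"
  shows "a - \<delta> \<le> norm v" "norm (T v) \<le> d + d'"
proof -
  show "a - \<delta> \<le> norm v" using u(1) uv(1) norm_triangle_sub[of u v] by linarith
  have "norm (T (u - v)) \<le> \<delta> * K"
    using T(2)[of "u - v"] uv(1) T(3) by (meson mult_right_mono less_imp_le order.trans)
  then have "norm (T u - T v) \<le> d'" using uv(2) by (simp add: linear_diff[OF T(1)])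
  then show "norm (T v) \<le> d + d'"
    using u(2) norm_triangle_sub[of "T v" "T u"] by (simp add: norm_minus_commute)
qed

lemma not_iso_on_imp_unit_vector:
  fixes T :: "'a::real_normed_vector \<Rightarrow> 'b::real_normed_vector"
  assumes "linear T" "\<And>c z. z \<in> Z \<Longrightarrow> c *\<^sub>R z \<in> Z" "\<not> iso_on T Z" "c > 0"
  shows "\<exists>z\<in>Z. norm z = 1 \<and> norm (T z) < c"
proof -
  obtain z where z: "z \<in> Z" "norm (T z) < c * norm z"
    using assms(3,4) unfolding iso_on_def by (auto simp: not_le)
  then have "z \<noteq> 0" by auto
  have "norm (T ((1 / norm z) *\<^sub>R z)) = norm (T z) / norm z"
    by (simp add: linear_scale[OF assms(1)])
  also have "\<dots> < c" using z(2) \<open>z \<noteq> 0\<close> by (simp add: divide_less_eq)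
  finally show ?thesis
    using \<open>z \<noteq> 0\<close> assms(2)[OF z(1)] by (intro bexI[of _ "(1 / norm z) *\<^sub>R z"]) auto
qed

section \<open>Order continuity and function representations\<close>

lemma order_continuous_decseq_tendsto_0:
  fixes w :: "nat \<Rightarrow> 'e::{banach, ordered_real_vector, lattice}"
  assumes OC: "order_continuous TYPE('e)" and w: "decseq w" "\<And>n. 0 \<le> w n"
    and inf: "\<And>z. (\<And>n. z \<le> w n) \<Longrightarrow> z \<le> 0"
  shows "w \<longlonglongrightarrow> 0"
proof (rule LIMSEQ_I)
  fix \<epsilon> :: real assume "\<epsilon> > 0"
  have "\<exists>a\<in>range w. \<forall>b\<in>range w. b \<le> a \<longrightarrow> norm (id b) < \<epsilon>"
  proof (rule OC[unfolded order_continuous_def, rule_format, of "range w" "\<lambda>a b. b \<le> a" id,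
        OF _ \<open>\<epsilon> > 0\<close>], intro conjI)
    show "\<forall>a\<in>range w. \<forall>b\<in>range w. \<exists>c\<in>range w. c \<le> a \<and> c \<le> b"
    proof (intro ballI)
      fix a b assume "a \<in> range w" "b \<in> range w"
      then obtain i j where "a = w i" "b = w j" by auto
      then show "\<exists>c\<in>range w. c \<le> a \<and> c \<le> b"
        using w(1) by (intro bexI[of _ "w (max i j)"]) (auto simp: decseq_def)
    qed
  qed (use w(2) inf in \<open>auto intro: order_trans\<close>)
  then obtain N where "\<And>n. w n \<le> w N \<Longrightarrow> norm (w n) < \<epsilon>" by auto
  then show "\<exists>N. \<forall>n\<ge>N. norm (w n - 0) < \<epsilon>" using w(1) by (auto simp: decseq_def)
qed

locale lattice_representation =
  fixes M :: "'w measure" and J :: "'e::{banach, ordered_real_vector, lattice} \<Rightarrow> 'w \<Rightarrow> real"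
  assumes representation: "function_representation M J"
    and lattice_norm: "banach_lattice TYPE('e)"
begin

sublocale prob_space M
  using representation unfolding function_representation_def by auto

lemma J_measurable [measurable]: "J x \<in> borel_measurable M"
  and integrable_J: "integrable M (J x)"
  and J_add: "AE t in M. J (x + y) t = J x t + J y t"
  and J_scaleR: "AE t in M. J (c *\<^sub>R x) t = c * J x t"
  and less_eq_iff_AE: "x \<le> y \<longleftrightarrow> (AE t in M. J x t \<le> J y t)"
  and ex_J_AE_eq: "f \<in> borel_measurable M \<Longrightarrow> ess_bounded M f \<Longrightarrow> \<exists>x. AE t in M. J x t = f t"
  and dense_ess_bounded: "\<epsilon> > 0 \<Longrightarrow> \<exists>y. ess_bounded M (J y) \<and> norm (x - y) < \<epsilon>"
  and integral_abs_le_norm_of_ess_bounded: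
    "ess_bounded M (J x) \<Longrightarrow> (\<integral>t. \<bar>J x t\<bar> \<partial>M) \<le> norm x"
  using representation unfolding function_representation_def by auto

lemma J_uminus: "AE t in M. J (- x) t = - J x t"
  using J_scaleR[of "-1" x] by simp

lemma J_diff: "AE t in M. J (x - y) t = J x t - J y t"
  using J_add[of x "-y"] J_uminus[of y] by eventually_elim simp

lemma J_zero: "AE t in M. J 0 t = 0"
  using J_scaleR[of 0 0] by simp

lemma J_sum: "finite I \<Longrightarrow> AE t in M. J (\<Sum>i\<in>I. f i) t = (\<Sum>i\<in>I. J (f i) t)"
proof (induction I rule: finite_induct)
  case (insert i I)
  show ?case using insert.IH J_add[of "f i" "\<Sum>i\<in>I. f i"] by eventually_elim (simp add: insert.hyps)
qed (use J_zero in simp)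

lemma eq_iff_AE: "x = y \<longleftrightarrow> (AE t in M. J x t = J y t)"
  unfolding order.eq_iff less_eq_iff_AE by (auto elim: AE_mp)

lemma J_lat_abs: "AE t in M. J (lat_abs x) t = \<bar>J x t\<bar>"
proof -
  define a where "a = lat_abs x"
  have "x \<le> a" "- x \<le> a" unfolding a_def lat_abs_def by auto
  then have lower: "AE t in M. \<bar>J x t\<bar> \<le> J a t"
    unfolding less_eq_iff_AE using J_uminus[of x] by eventually_elim auto
  \<comment> \<open>If \<open>J a\<close> exceeded \<open>\<bar>J x\<bar>\<close> on a non-null set, subtracting a bounded bump there would give
    a smaller upper bound of \<open>x\<close> and \<open>-x\<close>.\<close>
  define g where "g t = max 0 (min (J a t - \<bar>J x t\<bar>) 1)" for t
  have "g \<in> borel_measurable M" unfolding g_def by measurable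
  moreover have "ess_bounded M g" unfolding ess_bounded_def g_def
    by (intro exI[of _ 1] AE_I2) auto
  ultimately obtain b where b: "AE t in M. J b t = g t" using ex_J_AE_eq by blast
  have "x \<le> a - b" "- x \<le> a - b" unfolding less_eq_iff_AE
    using lower b J_diff[of a b] J_uminus[of x] by (eventually_elim, auto simp: g_def)+
  then have "a \<le> a - b" unfolding a_def lat_abs_def by simp
  then have "AE t in M. J b t \<le> 0"
    using J_diff[of a b] unfolding less_eq_iff_AE by eventually_elim simp
  then have "AE t in M. J a t \<le> \<bar>J x t\<bar>"
    using b by eventually_elim (auto simp: g_def)
  with lower show ?thesis unfolding a_def by eventually_elim auto
qed

lemma norm_le_of_AE_abs_le:
  assumes "AE t in M. \<bar>J x t\<bar> \<le> \<bar>J y t\<bar>"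
  shows "norm x \<le> norm y"
proof -
  have "lat_abs x \<le> lat_abs y"
    unfolding less_eq_iff_AE using assms J_lat_abs[of x] J_lat_abs[of y] by eventually_elim auto
  then show ?thesis using lattice_norm unfolding banach_lattice_def by blast
qed

lemma integral_abs_le_norm: "(\<integral>t. \<bar>J x t\<bar> \<partial>M) \<le> norm x"
proof -
  \<comment> \<open>Truncations of \<open>\<bar>J x\<bar>\<close> are bounded, so the defining inequality applies to them.\<close>
  have "\<exists>u. AE t in M. J u t = min \<bar>J x t\<bar> (real n)" for n :: nat
    by (rule ex_J_AE_eq) (auto simp: ess_bounded_def intro!: exI[of _ "real n"])
  then obtain u where u: "\<And>n. AE t in M. J (u n) t = min \<bar>J x t\<bar> (real n)" by metis
  have "(\<lambda>n. \<integral>t. min \<bar>J x t\<bar> (real n) \<partial>M) \<longlonglongrightarrow> (\<integral>t. \<bar>J x t\<bar> \<partial>M)"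
  proof (rule integral_dominated_convergence[where w="\<lambda>t. \<bar>J x t\<bar>"])
    show "AE t in M. (\<lambda>n. min \<bar>J x t\<bar> (real n)) \<longlonglongrightarrow> \<bar>J x t\<bar>"
    proof (rule AE_I2)
      fix t
      obtain N :: nat where "\<bar>J x t\<bar> \<le> real N" using real_arch_simple by blast
      then have "\<forall>n\<ge>N. min \<bar>J x t\<bar> (real n) = \<bar>J x t\<bar>" by auto
      then show "(\<lambda>n. min \<bar>J x t\<bar> (real n)) \<longlonglongrightarrow> \<bar>J x t\<bar>"
        by (intro tendsto_eventually) (auto simp: eventually_sequentially)
    qed
  qed (use integrable_J in auto)
  moreover have "(\<integral>t. min \<bar>J x t\<bar> (real n) \<partial>M) \<le> norm x" for n
  proof -
    have "(\<integral>t. min \<bar>J x t\<bar> (real n) \<partial>M) = (\<integral>t. \<bar>J (u n) t\<bar> \<partial>M)"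
      using u[of n] by (intro integral_cong_AE) (auto elim: AE_mp)
    also have "\<dots> \<le> norm (u n)"
      using u[of n] by (intro integral_abs_le_norm_of_ess_bounded)
        (auto simp: ess_bounded_def intro!: exI[of _ "real n"] elim: AE_mp)
    also have "\<dots> \<le> norm x" using u[of n] by (intro norm_le_of_AE_abs_le) (auto elim: AE_mp)
    finally show ?thesis .
  qed
  ultimately show ?thesis by (intro LIMSEQ_le_const2) auto
qed

definition is_restriction :: "'w set \<Rightarrow> 'e \<Rightarrow> 'e \<Rightarrow> bool" where
  "is_restriction B u w \<longleftrightarrow> (AE t in M. J w t = indicator B t * J u t)"

lemma ex_restriction:
  assumes "ess_bounded M (J u)" "B \<in> sets M"
  shows "\<exists>w. is_restriction B u w"
  unfolding is_restriction_def
proof (rule ex_J_AE_eq)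
  show "(\<lambda>t. indicator B t * J u t) \<in> borel_measurable M" using assms(2) by measurable
  show "ess_bounded M (\<lambda>t. indicator B t * J u t)"
    by (rule ess_bounded_AE_abs_le[OF assms(1)]) (auto simp: indicator_def)
qed

lemma ess_bounded_restriction:
  assumes "is_restriction B u w" "ess_bounded M (J u)"
  shows "ess_bounded M (J w)"
proof (rule ess_bounded_AE_abs_le[OF assms(2)])
  show "AE t in M. \<bar>J w t\<bar> \<le> \<bar>J u t\<bar>"
    using assms(1) unfolding is_restriction_def by eventually_elim (auto simp: indicator_def)
qed

lemma restriction_in_band:
  assumes "is_restriction B u w"
  shows "w \<in> band_of M J B"
  using assms unfolding is_restriction_def band_of_def mem_Collect_eq
  by eventually_elim (auto simp: indicator_def)

lemma restriction_tendsto_0: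
  assumes OC: "order_continuous TYPE('e)" and "0 \<le> u"
    and C: "decseq C" "\<And>n. C n \<in> sets M" "measure M (\<Inter>n. C n) = 0"
    and w: "\<And>n. is_restriction (C n) u (w n)"
  shows "w \<longlonglongrightarrow> 0"
proof (rule order_continuous_decseq_tendsto_0[OF OC])
  have u: "AE t in M. 0 \<le> J u t"
    using \<open>0 \<le> u\<close> J_zero unfolding less_eq_iff_AE by eventually_elim simp
  have w_AE: "AE t in M. \<forall>n. J (w n) t = indicator (C n) t * J u t"
    using w unfolding is_restriction_def by (simp add: AE_all_countable)
  show "decseq w"
  proof (rule decseq_SucI)
    fix n
    have sub: "C (Suc n) \<subseteq> C n" using C(1) by (rule decseq_SucD)
    show "w (Suc n) \<le> w n"
      unfolding less_eq_iff_AE using u w_AE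
      by eventually_elim (use sub in \<open>auto simp: indicator_def\<close>)
  qed
  show "0 \<le> w n" for n
    unfolding less_eq_iff_AE using u w_AE J_zero by eventually_elim simp
  fix z assume "\<And>n. z \<le> w n"
  then have "AE t in M. \<forall>n. J z t \<le> J (w n) t"
    unfolding less_eq_iff_AE by (simp add: AE_all_countable)
  moreover have "AE t in M. t \<notin> (\<Inter>n. C n)"
    using C(3) prob_eq_0[of "\<Inter>n. C n"] C(2) by auto
  ultimately show "z \<le> 0"
    unfolding less_eq_iff_AE using w_AE J_zero
    by eventually_elim (metis INT_I indicator_simps(2) mult_zero_left)
qed

lemma norm_restriction_small:
  assumes OC: "order_continuous TYPE('e)" and u: "ess_bounded M (J u)" and \<eta>: "\<eta> > 0"
  shows "\<exists>\<rho>>0. \<forall>B\<in>sets M. measure M B < \<rho> \<longrightarrow> (\<forall>w. is_restriction B u w \<longrightarrow> norm w < \<eta>)"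
proof (rule ccontr)
  assume "\<not> ?thesis"
  then have "\<forall>n::nat. \<exists>B. B \<in> sets M \<and> measure M B < (1/2) ^ n \<and>
      (\<exists>w. is_restriction B u w \<and> \<eta> \<le> norm w)"
    by (metis not_less zero_less_divide_1_iff zero_less_numeral zero_less_power)
  then obtain B where B: "\<forall>n. B n \<in> sets M \<and> measure M (B n) < (1/2) ^ n \<and>
      (\<exists>w. is_restriction (B n) u w \<and> \<eta> \<le> norm w)"
    by (rule choice[THEN exE])
  then obtain v where v: "\<forall>n. is_restriction (B n) u (v n) \<and> \<eta> \<le> norm (v n)"
    using choice[of "\<lambda>n w. is_restriction (B n) u w \<and> \<eta> \<le> norm w"] by blast
  define C where "C n = (\<Union>k. B (k + n))" for n
  have C_sets: "C n \<in> sets M" for n unfolding C_def using B by auto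
  have "decseq C" unfolding C_def by (rule decseq_UN_shift)
  have C_null: "measure M (\<Inter>n. C n) = 0"
    unfolding C_def using B by (intro measure_Inter_UN_shift_eq_0) (auto simp: less_imp_le)
  have abs_u: "ess_bounded M (J (lat_abs u))"
    using J_lat_abs[of u] by (intro ess_bounded_AE_abs_le[OF u]) (auto elim: AE_mp)
  obtain w where w: "\<And>n. is_restriction (C n) (lat_abs u) (w n)"
    using ex_restriction[OF abs_u C_sets] by metis
  have "0 \<le> lat_abs u"
    unfolding less_eq_iff_AE using J_lat_abs[of u] J_zero by eventually_elim simp
  then have "w \<longlonglongrightarrow> 0" using restriction_tendsto_0[OF OC _ \<open>decseq C\<close> C_sets C_null w] by blast
  then obtain n where n: "norm (w n) < \<eta>" using LIMSEQ_D[OF _ \<eta>] by fastforce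
  have sub: "B n \<subseteq> C n" unfolding C_def by (auto intro: UN_I[of 0])
  have "AE t in M. J (v n) t = indicator (B n) t * J u t"
    using v unfolding is_restriction_def by blast
  then have "norm (v n) \<le> norm (w n)"
    using w[of n] J_lat_abs[of u] unfolding is_restriction_def
    by (intro norm_le_of_AE_abs_le, eventually_elim) (use sub in \<open>auto simp: indicator_def\<close>)
  then show False using v n by (meson not_less order.trans)
qed

section \<open>Disjoint sequences\<close>

lemma disjoint_elems_of_AE:
  assumes "AE t in M. J x t * J y t = 0"
  shows "disjoint_elems x y"
proof -
  have "inf (lat_abs x) (lat_abs y) \<le> lat_abs x" "inf (lat_abs x) (lat_abs y) \<le> lat_abs y" by auto
  then have "inf (lat_abs x) (lat_abs y) \<le> 0"
    unfolding less_eq_iff_AE using J_lat_abs[of x] J_lat_abs[of y] J_zero assms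
    by eventually_elim (auto simp: mult_eq_0_iff)
  moreover have "0 \<le> lat_abs x" "0 \<le> lat_abs y"
    unfolding less_eq_iff_AE using J_lat_abs[of x] J_lat_abs[of y] J_zero
    by (eventually_elim, auto)+
  ultimately show ?thesis unfolding disjoint_elems_def by (simp add: order.antisym)
qed

lemma abs_coeff_mult_norm_le_norm_sum:
  fixes y :: "nat \<Rightarrow> 'e"
  assumes disj: "\<And>n m. n \<noteq> m \<Longrightarrow> AE t in M. J (y n) t * J (y m) t = 0" and "k < N"
  shows "\<bar>a k\<bar> * norm (y k) \<le> norm (\<Sum>n<N. a n *\<^sub>R y n)"
proof -
  have "AE t in M. J (\<Sum>n<N. a n *\<^sub>R y n) t = (\<Sum>n<N. J (a n *\<^sub>R y n) t)"
    by (rule J_sum) simp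
  moreover have "AE t in M. \<forall>n. J (a n *\<^sub>R y n) t = a n * J (y n) t"
    using J_scaleR by (simp add: AE_all_countable)
  moreover have "AE t in M. \<forall>n. n \<noteq> k \<longrightarrow> J (y n) t * J (y k) t = 0"
    using disj by (simp add: AE_all_countable)
  ultimately have "AE t in M. \<bar>J (a k *\<^sub>R y k) t\<bar> \<le> \<bar>J (\<Sum>n<N. a n *\<^sub>R y n) t\<bar>"
  proof eventually_elim
    case (elim t)
    \<comment> \<open>Where \<open>y k\<close> does not vanish, all other \<open>y n\<close> do.\<close>
    show ?case
    proof (cases "J (y k) t = 0")
      case False
      then have "(\<Sum>n\<in>{..<N} - {k}. a n * J (y n) t) = 0" using elim(3) by (intro sum.neutral) auto
      then have "(\<Sum>n<N. a n * J (y n) t) = a k * J (y k) t"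
        using \<open>k < N\<close> by (simp add: sum.remove)
      then show ?thesis using elim(1,2) by simp
    qed (use elim in simp)
  qed
  then have "norm (a k *\<^sub>R y k) \<le> norm (\<Sum>n<N. a n *\<^sub>R y n)" by (rule norm_le_of_AE_abs_le)
  then show ?thesis by simp
qed

lemma AE_norm_J_mult_le:
  assumes "AE t in M. \<bar>g t\<bar> \<le> G"
  shows "AE t in M. norm (J x t * g t) \<le> max G 0 * \<bar>J x t\<bar>"
proof -
  have "AE t in M. \<bar>g t\<bar> * \<bar>J x t\<bar> \<le> max G 0 * \<bar>J x t\<bar>"
    using assms by eventually_elim (rule mult_right_mono, auto)
  then show ?thesis by eventually_elim (simp add: abs_mult mult.commute)
qed

lemma integrable_J_mult:
  assumes "g \<in> borel_measurable M" "AE t in M. \<bar>g t\<bar> \<le> G"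
  shows "integrable M (\<lambda>t. J x t * g t)"
proof (rule Bochner_Integration.integrable_bound)
  show "integrable M (\<lambda>t. max G 0 * \<bar>J x t\<bar>)" using integrable_J by auto
  show "(\<lambda>t. J x t * g t) \<in> borel_measurable M" using assms(1) by measurable
  show "AE t in M. norm (J x t * g t) \<le> norm (max G 0 * \<bar>J x t\<bar>)"
    using AE_norm_J_mult_le[OF assms(2)] by eventually_elim simp
qed

lemma bounded_linear_integral_mult:
  assumes g: "g \<in> borel_measurable M" "AE t in M. \<bar>g t\<bar> \<le> G"
  shows "bounded_linear (\<lambda>x. \<integral>t. J x t * g t \<partial>M)"
proof -
  note g(1)[measurable]
  have int: "integrable M (\<lambda>t. J x t * g t)" for x using integrable_J_mult[OF g] .
  note bound = AE_norm_J_mult_le[OF g(2)]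
  show ?thesis
  proof (rule bounded_linear_intro[where K="max G 0"])
    fix x y
    have "(\<integral>t. J (x + y) t * g t \<partial>M) = (\<integral>t. J x t * g t + J y t * g t \<partial>M)"
      using J_add[of x y]
      by (intro integral_cong_AE; (measurable)?) (auto simp: distrib_right elim: AE_mp)
    then show "(\<integral>t. J (x + y) t * g t \<partial>M) = (\<integral>t. J x t * g t \<partial>M) + (\<integral>t. J y t * g t \<partial>M)"
      using int by simp
  next
    fix r x
    have "(\<integral>t. J (r *\<^sub>R x) t * g t \<partial>M) = (\<integral>t. r * (J x t * g t) \<partial>M)"
      using J_scaleR[of r x] by (intro integral_cong_AE; (measurable)?) (auto elim: AE_mp)
    then show "(\<integral>t. J (r *\<^sub>R x) t * g t \<partial>M) = r *\<^sub>R (\<integral>t. J x t * g t \<partial>M)" by simp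
  next
    fix x
    have "norm (\<integral>t. J x t * g t \<partial>M) \<le> (\<integral>t. norm (J x t * g t) \<partial>M)"
      by (rule integral_norm_bound)
    also have "\<dots> \<le> (\<integral>t. max G 0 * \<bar>J x t\<bar> \<partial>M)"
      using bound integrable_norm[OF int] integrable_J by (intro integral_mono_AE) auto
    also have "\<dots> \<le> max G 0 * norm x"
      using integral_abs_le_norm[of x] by (simp add: mult_left_mono)
    finally show "norm (\<integral>t. J x t * g t \<partial>M) \<le> norm x * max G 0" by (simp add: mult.commute)
  qed
qed

lemma exists_biorthogonal_functionals:
  fixes y :: "nat \<Rightarrow> 'e"
  assumes disj: "\<And>n m. n \<noteq> m \<Longrightarrow> AE t in M. J (y n) t * J (y m) t = 0"
    and y: "\<And>n. ess_bounded M (J (y n))" "\<And>n. y n \<noteq> 0"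
  shows "\<exists>\<phi> :: nat \<Rightarrow> 'e \<Rightarrow> real.
    \<forall>k. bounded_linear (\<phi> k) \<and> (\<forall>n. \<phi> k (y n) = (if n = k then 1 else 0))"
proof -
  define c where "c k = (\<integral>t. J (y k) t * J (y k) t \<partial>M)" for k
  have c_pos: "0 < c k" for k
  proof -
    obtain G where G: "AE t in M. \<bar>J (y k) t\<bar> \<le> G" using y(1) unfolding ess_bounded_def by blast
    have "integrable M (\<lambda>t. J (y k) t * J (y k) t)"
      using G by (rule integrable_J_mult[rotated]) simp
    moreover have "\<not> (AE t in M. J (y k) t * J (y k) t = 0)"
    proof
      assume "AE t in M. J (y k) t * J (y k) t = 0"
      then have "AE t in M. J (y k) t = J 0 t" using J_zero by eventually_elim simp
      then show False using y(2)[of k] eq_iff_AE by blast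
    qed
    ultimately show ?thesis
      unfolding c_def by (simp add: integral_nonneg_eq_0_iff_AE order_less_le)
  qed
  define \<phi> where "\<phi> k x = (\<integral>t. J x t * (J (y k) t / c k) \<partial>M)" for k x
  have "bounded_linear (\<phi> k)" for k
  proof -
    obtain G where "AE t in M. \<bar>J (y k) t\<bar> \<le> G" using y(1) unfolding ess_bounded_def by blast
    then have "AE t in M. \<bar>J (y k) t / c k\<bar> \<le> G / c k"
      by eventually_elim (use c_pos[of k] in \<open>simp add: divide_right_mono\<close>)
    then show ?thesis unfolding \<phi>_def[abs_def] by (intro bounded_linear_integral_mult) auto
  qed
  moreover have "\<phi> k (y n) = (if n = k then 1 else 0)" for k n
  proof (cases "n = k")
    case True
    then show ?thesis using c_pos[of k] unfolding \<phi>_def c_def by simp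
  next
    case False
    have "AE t in M. J (y n) t * (J (y k) t / c k) = 0"
      using disj[OF False] by eventually_elim (simp only: times_divide_eq_right div_0)
    then have "\<phi> k (y n) = 0" unfolding \<phi>_def by (rule integral_eq_zero_AE)
    then show ?thesis using False by simp
  qed
  ultimately show ?thesis by blast
qed

lemma strictly_singular_on_disjoint_sequence:
  fixes T :: "'e \<Rightarrow> 'y::real_normed_vector" and y :: "nat \<Rightarrow> 'e"
  assumes T: "bounded_linear T"
    and disj: "\<And>n m. n \<noteq> m \<Longrightarrow> AE t in M. J (y n) t * J (y m) t = 0"
    and y: "\<And>n. ess_bounded M (J (y n))" "\<And>n. 1/4 \<le> norm (y n)"
    and small: "\<And>n. norm (T (y n)) \<le> (1/4) ^ n"
  shows "strictly_singular_on T (closure (span (range y)))"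
proof -
  have "y n \<noteq> 0" for n using y(2)[of n] by auto
  then obtain \<phi> :: "nat \<Rightarrow> 'e \<Rightarrow> real"
    where \<phi>: "\<And>k. bounded_linear (\<phi> k)" "\<And>k n. \<phi> k (y n) = (if n = k then 1 else 0)"
    using exists_biorthogonal_functionals[of y, OF disj y(1)] by blast
  have "\<bar>\<phi> k s\<bar> \<le> 4 * norm s" if s: "s \<in> span (range y)" for s k
  proof -
    obtain N where N: "s = (\<Sum>n<N. \<phi> n s *\<^sub>R y n)" "\<forall>k\<ge>N. \<phi> k s = 0"
      using span_range_eq_biorthogonal_sum[OF bounded_linear.linear[OF \<phi>(1)] \<phi>(2) s] by blast
    show ?thesis
    proof (cases "k < N")
      case True
      have "\<bar>\<phi> k s\<bar> * (1/4) \<le> \<bar>\<phi> k s\<bar> * norm (y k)" using y(2) by (rule mult_left_mono) simp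
      also have "\<dots> \<le> norm (\<Sum>n<N. \<phi> n s *\<^sub>R y n)"
        by (rule abs_coeff_mult_norm_le_norm_sum[where y=y, OF disj True])
      also have "\<dots> = norm s" using N(1) by (simp only:)
      finally show ?thesis by simp
    qed (use N(2) in simp)
  qed
  then show ?thesis
    by (rule strictly_singular_on_closure_span_of_coefficient_bound[OF T \<phi>]) (use small in auto)
qed

lemma band_of_scaleR: "x \<in> band_of M J A \<Longrightarrow> c *\<^sub>R x \<in> band_of M J A"
  unfolding band_of_def mem_Collect_eq using J_scaleR[of c x] by (auto elim: AE_mp)

lemma exists_almost_null_in_band:
  fixes T :: "'e \<Rightarrow> 'y::real_normed_vector"
  assumes T: "linear T" "\<And>x. norm (T x) \<le> norm x * K" "K > 0"
    and A: "A \<in> sets M" "\<not> iso_on T (band_of M J A)" and "d > 0"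
  shows "\<exists>u. u \<in> band_of M J A \<and> ess_bounded M (J u) \<and> 1/2 \<le> norm u \<and> norm (T u) \<le> d"
proof -
  obtain z where z: "z \<in> band_of M J A" "norm z = 1" "norm (T z) < d/2"
    using not_iso_on_imp_unit_vector[OF T(1) band_of_scaleR A(2), of "d/2"] \<open>d > 0\<close> by auto
  define \<delta> where "\<delta> = min (1/2) (d / (2 * K))"
  have "\<delta> > 0" unfolding \<delta>_def using \<open>d > 0\<close> T(3) by simp
  then obtain v where v: "ess_bounded M (J v)" "norm (z - v) < \<delta>" using dense_ess_bounded by blast
  obtain u where u: "is_restriction A v u" using ex_restriction[OF v(1) A(1)] by blast
  have "AE t in M. \<bar>J (z - u) t\<bar> \<le> \<bar>J (z - v) t\<bar>"
    using z(1) u J_diff[of z u] J_diff[of z v]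
    unfolding band_of_def is_restriction_def mem_Collect_eq
    by eventually_elim (auto simp: indicator_def)
  then have "norm (z - u) \<le> norm (z - v)" by (rule norm_le_of_AE_abs_le)
  with v(2) have zu: "norm (z - u) \<le> \<delta>" by simp
  have \<delta>K: "\<delta> * K \<le> d/2"
  proof -
    have "\<delta> * K \<le> d / (2 * K) * K" unfolding \<delta>_def using T(3) by (intro mult_right_mono) auto
    then show ?thesis using T(3) by simp
  qed
  have "1 - \<delta> \<le> norm u" "norm (T u) \<le> d/2 + d/2"
    using norm_ge_and_image_norm_le_perturb[where a=1, OF T _ less_imp_le[OF z(3)] zu \<delta>K] z(2)
    by auto
  moreover have "1 - \<delta> \<ge> 1/2" unfolding \<delta>_def by simp
  ultimately show ?thesis
    using restriction_in_band[OF u] ess_bounded_restriction[OF u v(1)] by (intro exI[of _ u]) auto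
qed

lemma norm_diff_restriction_le:
  assumes "u \<in> band_of M J A" "is_restriction (A - U) u y" "is_restriction U u r"
  shows "norm (u - y) \<le> norm r"
proof (rule norm_le_of_AE_abs_le)
  show "AE t in M. \<bar>J (u - y) t\<bar> \<le> \<bar>J r t\<bar>"
    using assms J_diff[of u y] unfolding band_of_def is_restriction_def mem_Collect_eq
    by eventually_elim (auto simp: indicator_def)
qed

lemma exists_sparse_almost_null_sequence:
  fixes T :: "'e \<Rightarrow> 'y::real_normed_vector"
  assumes OC: "order_continuous TYPE('e)"
    and T: "linear T" "\<And>x. norm (T x) \<le> norm x * K" "K > 0"
    and small_bands: "\<And>r. r > 0 \<Longrightarrow> \<exists>A\<in>sets M. measure M A < r \<and> \<not> iso_on T (band_of M J A)"
    and d: "\<And>n. d n > 0" and \<eta>: "\<And>n. \<eta> n > 0"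
  shows "\<exists>A u \<rho>. \<forall>n. A n \<in> sets M \<and> u n \<in> band_of M J (A n) \<and> ess_bounded M (J (u n))
    \<and> 1/2 \<le> norm (u n) \<and> norm (T (u n)) \<le> d n
    \<and> (\<forall>B\<in>sets M. measure M B < \<rho> n \<longrightarrow> (\<forall>w. is_restriction B (u n) w \<longrightarrow> norm w < \<eta> n))
    \<and> measure M (\<Union>k. A (k + Suc n)) < \<rho> n"
proof -
  define P where "P n A u \<rho> \<longleftrightarrow> u \<in> band_of M J A \<and> ess_bounded M (J u) \<and> 1/2 \<le> norm u
      \<and> norm (T u) \<le> d n \<and> (\<forall>B\<in>sets M. measure M B < \<rho> \<longrightarrow> (\<forall>w. is_restriction B u w \<longrightarrow> norm w < \<eta> n))"
    for n A u \<rho>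
  have step: "\<exists>A u \<rho>. A \<in> sets M \<and> measure M A < m \<and> \<rho> > 0 \<and> P n A u \<rho>" if m: "m > 0" for n m
  proof -
    obtain A where A: "A \<in> sets M" "measure M A < m" "\<not> iso_on T (band_of M J A)"
      using small_bands[OF m] by blast
    obtain u where u: "u \<in> band_of M J A" "ess_bounded M (J u)" "1/2 \<le> norm u" "norm (T u) \<le> d n"
      using exists_almost_null_in_band[OF T A(1,3) d] by auto
    obtain \<rho> where "\<rho> > 0"
        "\<forall>B\<in>sets M. measure M B < \<rho> \<longrightarrow> (\<forall>w. is_restriction B u w \<longrightarrow> norm w < \<eta> n)"
      using norm_restriction_small[OF OC u(2) \<eta>] by blast
    then show ?thesis using A u unfolding P_def by blast
  qed
  have "\<exists>A u \<rho>. \<forall>n. A n \<in> sets M \<and> \<rho> n > 0 \<and> P n (A n) (u n) (\<rho> n)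
      \<and> measure M (\<Union>k. A (k + Suc n)) < \<rho> n"
    by (rule exists_sparse_sequence[of P]) (rule step)
  then obtain A u \<rho> where
    seq: "\<forall>n. A n \<in> sets M \<and> \<rho> n > 0 \<and> P n (A n) (u n) (\<rho> n) \<and> measure M (\<Union>k. A (k + Suc n)) < \<rho> n"
    by (elim exE)
  then show ?thesis unfolding P_def by (intro exI[of _ A] exI[of _ u] exI[of _ \<rho>]) blast
qed

lemma restrictions_off_later_sets_AE_disjoint:
  assumes y: "\<And>n. is_restriction (A n - (\<Union>k. A (k + Suc n))) (u n) (y n)" and "n \<noteq> m"
  shows "AE t in M. J (y n) t * J (y m) t = 0"
proof -
  have less: "AE t in M. J (y n) t * J (y m) t = 0" if "n < m" for n m
  proof -
    have "A m \<subseteq> (\<Union>k. A (k + Suc n))" using \<open>n < m\<close> by (auto intro!: UN_I[of "m - Suc n"])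
    show ?thesis using y[of n] y[of m] unfolding is_restriction_def
      by eventually_elim (use \<open>A m \<subseteq> (\<Union>k. A (k + Suc n))\<close> in \<open>auto simp: indicator_def\<close>)
  qed
  show ?thesis
  proof (cases "n < m")
    case False
    with \<open>n \<noteq> m\<close> have "m < n" by simp
    from less[OF this] show ?thesis by (simp add: mult.commute)
  qed (rule less)
qed

lemma exists_disjoint_almost_null_sequence:
  fixes T :: "'e \<Rightarrow> 'y::real_normed_vector"
  assumes OC: "order_continuous TYPE('e)" and T: "bounded_linear T"
    and small_bands: "\<And>r. r > 0 \<Longrightarrow> \<exists>A\<in>sets M. measure M A < r \<and> \<not> iso_on T (band_of M J A)"
  shows "\<exists>y. (\<forall>n. ess_bounded M (J (y n)) \<and> 1/4 \<le> norm (y n) \<and> norm (T (y n)) \<le> (1/4) ^ n)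
    \<and> (\<forall>n m. n \<noteq> m \<longrightarrow> (AE t in M. J (y n) t * J (y m) t = 0))"
proof -
  obtain K where K: "K > 0" "\<And>x. norm (T x) \<le> norm x * K"
    using bounded_linear.pos_bounded[OF T] by blast
  note linT = bounded_linear.linear[OF T]
  define \<eta> where "\<eta> n = min (1/4) ((1/4) ^ n / (2 * K))" for n :: nat
  have pos: "(1/4::real) ^ n / 2 > 0" "\<eta> n > 0" for n unfolding \<eta>_def using K(1) by simp_all
  obtain A u \<rho> where seq: "\<forall>n. A n \<in> sets M \<and> u n \<in> band_of M J (A n) \<and> ess_bounded M (J (u n))
      \<and> 1/2 \<le> norm (u n) \<and> norm (T (u n)) \<le> (1/4) ^ n / 2
      \<and> (\<forall>B\<in>sets M. measure M B < \<rho> n \<longrightarrow> (\<forall>w. is_restriction B (u n) w \<longrightarrow> norm w < \<eta> n))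
      \<and> measure M (\<Union>k. A (k + Suc n)) < \<rho> n"
    using exists_sparse_almost_null_sequence[where d="\<lambda>n. (1/4) ^ n / 2" and \<eta>=\<eta>,
        OF OC linT K(2,1) small_bands pos] by blast
  then have A: "\<And>n. A n \<in> sets M" and u: "\<And>n. u n \<in> band_of M J (A n)"
      "\<And>n. ess_bounded M (J (u n))" "\<And>n. 1/2 \<le> norm (u n)" "\<And>n. norm (T (u n)) \<le> (1/4) ^ n / 2"
    and small_restrictions: "\<And>n B w. B \<in> sets M \<Longrightarrow> measure M B < \<rho> n \<Longrightarrow> is_restriction B (u n) w
        \<Longrightarrow> norm w < \<eta> n"
    and sparse: "\<And>n. measure M (\<Union>k. A (k + Suc n)) < \<rho> n"
    by blast+
  define U where "U n = (\<Union>k. A (k + Suc n))" for n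
  have U: "U n \<in> sets M" for n unfolding U_def using A by auto
  have "\<forall>n. \<exists>w. is_restriction (A n - U n) (u n) w" using ex_restriction u(2) A U by blast
  then obtain y where y: "\<And>n. is_restriction (A n - U n) (u n) (y n)" by metis
  have "\<forall>n. \<exists>w. is_restriction (U n) (u n) w" using ex_restriction u(2) U by blast
  then obtain r where r: "\<And>n. is_restriction (U n) (u n) (r n)" by metis
  have close: "norm (u n - y n) \<le> \<eta> n" for n
  proof -
    have "norm (u n - y n) \<le> norm (r n)" using u(1) y r by (rule norm_diff_restriction_le)
    also have "\<dots> < \<eta> n" using small_restrictions[OF U sparse[folded U_def] r] .
    finally show ?thesis by simp
  qed
  have \<eta>K: "\<eta> n * K \<le> (1/4) ^ n / 2" for n
  proof -
    have "\<eta> n * K \<le> (1/4) ^ n / (2 * K) * K"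
      unfolding \<eta>_def using K(1) by (intro mult_right_mono) auto
    then show ?thesis using K(1) by simp
  qed
  have perturbed: "1/2 - \<eta> n \<le> norm (y n)" "norm (T (y n)) \<le> (1/4) ^ n / 2 + (1/4) ^ n / 2" for n
    using norm_ge_and_image_norm_le_perturb[OF linT K(2,1) u(3,4) close \<eta>K] by simp_all
  have "1/4 \<le> norm (y n)" for n using perturbed(1)[of n] unfolding \<eta>_def by linarith
  moreover have "norm (T (y n)) \<le> (1/4) ^ n" for n using perturbed(2)[of n] by simp
  ultimately have "\<forall>n. ess_bounded M (J (y n)) \<and> 1/4 \<le> norm (y n) \<and> norm (T (y n)) \<le> (1/4) ^ n"
    using ess_bounded_restriction[OF y u(2)] by blast
  moreover have "\<forall>n m. n \<noteq> m \<longrightarrow> (AE t in M. J (y n) t * J (y m) t = 0)"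
    using restrictions_off_later_sets_AE_disjoint[of A u y, OF y[unfolded U_def]] by blast
  ultimately show ?thesis by (intro exI[of _ y] conjI)
qed

end

theorem corollary3p2:
  fixes M :: "'w measure"
    and J :: "'e::{banach, ordered_real_vector, lattice} \<Rightarrow> 'w \<Rightarrow> real"
    and T :: "'e \<Rightarrow> 'y::banach"
    and e :: 'e
  assumes "banach_lattice TYPE('e)"
    and "order_continuous TYPE('e)"
    and "weak_unit e"
    and "function_representation M J"
    and "DN_S T"
  shows "\<exists>r>0. \<forall>A \<in> sets M. 0 < measure M A \<and> measure M A < r \<longrightarrow> iso_on T (band_of M J A)"
proof (rule ccontr)
  \<comment> \<open>The weak unit only serves to produce the representation \<open>J\<close>, which is assumed here.\<close>
  interpret lattice_representation M J using assms(4,1) by unfold_locales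
  have T: "bounded_linear T" using assms(5) unfolding DN_S_def by blast
  assume "\<not> ?thesis"
  then have "\<exists>A\<in>sets M. measure M A < r \<and> \<not> iso_on T (band_of M J A)" if "r > 0" for r
    using that by blast
  then obtain y where y: "\<And>n. ess_bounded M (J (y n))" "\<And>n. 1/4 \<le> norm (y n)"
      "\<And>n. norm (T (y n)) \<le> (1/4) ^ n"
    and disj: "\<And>n m. n \<noteq> m \<Longrightarrow> AE t in M. J (y n) t * J (y m) t = 0"
    using exists_disjoint_almost_null_sequence[OF assms(2) T] by blast
  have "strictly_singular_on T (closure (span (range y)))"
    using strictly_singular_on_disjoint_sequence[OF T disj y] .
  moreover have "\<forall>n. y n \<noteq> 0"
    using y(2) by (metis norm_zero not_le zero_less_divide_1_iff zero_less_numeral)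
  moreover have "\<forall>n m. n \<noteq> m \<longrightarrow> disjoint_elems (y n) (y m)"
    using disjoint_elems_of_AE[OF disj] by blast
  ultimately show False using assms(5) unfolding DN_S_def by blast
qed

end
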